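(* Let $H = N \rtimes T$ be a finite group where $N$ is abelian and $T$ is flat. Then $\mathrm{MaxDim}(H) = \mathrm{MaxDim}_T(N) + \mathrm{MaxDim}(T)$, where $T$ acts on $N$ by conjugation.
   Context: All groups are finite. A subset $s$ of a group is irredundant if $\langle s \setminus \{h\}\rangle \neq \langle s \rangle$ for every $h \in s$; $m(G)$ is the maximal size of an irredundant generating set of $G$ and $i(G)$ the maximal size of an irredundant subset of $G$. $G$ is flat if $m(G) = i(G)$. A finite set $\{H_1,\dots,H_n\}$ of subgroups of $G$ is in general position if for every $1 \le j \le n$, $\bigcap_{i \neq j} H_i \supsetneq \bigcap_{i} H_i$. $\mathrm{MaxDim}(G)$ is the largest cardinality of a collection of maximal subgroups of $G$ in general position. If a group $B$ acts on $G$, $\mathrm{MaxDim}_B(G)$ is the largest cardinality of a collection of maximal $B$-invariant (proper) subgroups of $G$ that is in general position. *)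

theory Defs
  imports "HOL-Algebra.Algebra"
begin

definition irredundant :: "('a, 'b) monoid_scheme \<Rightarrow> 'a set \<Rightarrow> bool" where
  "irredundant G s \<longleftrightarrow> s \<subseteq> carrier G \<and>
     (\<forall>h\<in>s. generate G (s - {h}) \<noteq> generate G s)"

definition m_irr :: "('a, 'b) monoid_scheme \<Rightarrow> nat" where
  "m_irr G = Max {card s | s. irredundant G s \<and> generate G s = carrier G}"

definition i_irr :: "('a, 'b) monoid_scheme \<Rightarrow> nat" where
  "i_irr G = Max {card s | s. irredundant G s}"

definition flat :: "('a, 'b) monoid_scheme \<Rightarrow> bool" where
  "flat G \<longleftrightarrow> m_irr G = i_irr G"

definition maximal_subgroup :: "('a, 'b) monoid_scheme \<Rightarrow> 'a set \<Rightarrow> bool" where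
  "maximal_subgroup G M \<longleftrightarrow> subgroup M G \<and> M \<noteq> carrier G \<and>
     (\<forall>K. subgroup K G \<and> M \<subseteq> K \<longrightarrow> K = M \<or> K = carrier G)"

(* A finite collection of subgroups of G is in general position if removing any
   member strictly enlarges the intersection (empty intersection = carrier G). *)
definition general_position :: "('a, 'b) monoid_scheme \<Rightarrow> 'a set set \<Rightarrow> bool" where
  "general_position G \<H> \<longleftrightarrow> finite \<H> \<and>
     (\<forall>Hj\<in>\<H>. carrier G \<inter> \<Inter>(\<H> - {Hj}) \<supset> carrier G \<inter> \<Inter>\<H>)"

definition MaxDim :: "('a, 'b) monoid_scheme \<Rightarrow> nat" where
  "MaxDim G = Max {card \<M> | \<M>. (\<forall>M\<in>\<M>. maximal_subgroup G M) \<and> general_position G \<M>}"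

definition conj_invariant :: "('a, 'b) monoid_scheme \<Rightarrow> 'a set \<Rightarrow> 'a set \<Rightarrow> bool" where
  "conj_invariant H B K \<longleftrightarrow> (\<forall>t\<in>B. (\<lambda>k. t \<otimes>\<^bsub>H\<^esub> k \<otimes>\<^bsub>H\<^esub> inv\<^bsub>H\<^esub> t) ` K = K)"

definition maximal_inv_subgroup :: "('a, 'b) monoid_scheme \<Rightarrow> 'a set \<Rightarrow> 'a set \<Rightarrow> 'a set \<Rightarrow> bool" where
  "maximal_inv_subgroup H B N K \<longleftrightarrow>
     subgroup K (H\<lparr>carrier := N\<rparr>) \<and> K \<noteq> N \<and> conj_invariant H B K \<and>
     (\<forall>L. subgroup L (H\<lparr>carrier := N\<rparr>) \<and> conj_invariant H B L \<and> K \<subseteq> L \<longrightarrow> L = K \<or> L = N)"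

definition MaxDim_act :: "('a, 'b) monoid_scheme \<Rightarrow> 'a set \<Rightarrow> 'a set \<Rightarrow> nat" where
  "MaxDim_act H B N = Max {card \<M> | \<M>. (\<forall>K\<in>\<M>. maximal_inv_subgroup H B N K) \<and>
                                      general_position (H\<lparr>carrier := N\<rparr>) \<M>}"

end

theory Submission
  imports Defs
begin

(* Maximal subgroups of H = N T come in two kinds: those containing N are the products N M with
   M maximal in T, and those not containing N meet N in a maximal T-invariant subgroup K (here
   N abelian makes K normal), with K T maximal.  Lifting a family of maximal T-invariant
   subgroups of N and a family of maximal subgroups of T, both in general position, gives a
   family in general position in H, whence MaxDim_T(N) + MaxDim(T) <= MaxDim(H).  Conversely,
   let F be a family in general position in H and S a minimal subfamily with
   N \<inter> \<Inter>S = N \<inter> \<Inter>F: intersecting S with N shows |S| <= MaxDim_T(N), and the T-components of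
   points separating the members of F - S from the others form an irredundant subset of T, so
   |F - S| <= i(T).  Flatness closes the gap: i(T) = m(T) <= MaxDim(T). *)

lemma general_position_iff:
  "general_position G F \<longleftrightarrow>
     finite F \<and> (\<exists>x. \<forall>Q\<in>F. x Q \<in> carrier G \<and> (\<forall>Y\<in>F. x Q \<in> Y \<longleftrightarrow> Y \<noteq> Q))"
proof -
  have witness: "carrier G \<inter> \<Inter>(F - {Q}) \<supset> carrier G \<inter> \<Inter>F \<longleftrightarrow>
        (\<exists>x\<in>carrier G. \<forall>Y\<in>F. x \<in> Y \<longleftrightarrow> Y \<noteq> Q)" if "Q \<in> F" for Q
    using that by blast
  have choice: "(\<forall>Q\<in>F. \<exists>x\<in>carrier G. \<forall>Y\<in>F. x \<in> Y \<longleftrightarrow> Y \<noteq> Q) \<longleftrightarrow>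
      (\<exists>x. \<forall>Q\<in>F. x Q \<in> carrier G \<and> (\<forall>Y\<in>F. x Q \<in> Y \<longleftrightarrow> Y \<noteq> Q))"
  proof
    assume "\<forall>Q\<in>F. \<exists>x\<in>carrier G. \<forall>Y\<in>F. x \<in> Y \<longleftrightarrow> Y \<noteq> Q"
    then have "\<forall>Q\<in>F. \<exists>x. x \<in> carrier G \<and> (\<forall>Y\<in>F. x \<in> Y \<longleftrightarrow> Y \<noteq> Q)" by blast
    then show "\<exists>x. \<forall>Q\<in>F. x Q \<in> carrier G \<and> (\<forall>Y\<in>F. x Q \<in> Y \<longleftrightarrow> Y \<noteq> Q)"
      by (rule bchoice)
  qed blast
  have "(\<forall>Q\<in>F. carrier G \<inter> \<Inter>(F - {Q}) \<supset> carrier G \<inter> \<Inter>F) \<longleftrightarrow>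
      (\<forall>Q\<in>F. \<exists>x\<in>carrier G. \<forall>Y\<in>F. x \<in> Y \<longleftrightarrow> Y \<noteq> Q)"
    by (rule ball_cong[OF refl witness])
  then show ?thesis
    unfolding general_position_def choice by (rule arg_cong)
qed

lemma general_position_image:
  assumes "finite R" "\<And>a. a \<in> R \<Longrightarrow> x a \<in> carrier G"
    and "\<And>a b. a \<in> R \<Longrightarrow> b \<in> R \<Longrightarrow> x a \<in> W b \<longleftrightarrow> a \<noteq> b"
  shows "general_position G (W ` R)" "inj_on W R"
proof -
  show inj: "inj_on W R"
  proof (rule inj_onI)
    fix a b assume "a \<in> R" "b \<in> R" "W a = W b"
    then show "a = b" using assms(3)[of a a] assms(3)[of a b] by auto
  qed
  have "\<exists>x'. \<forall>Q\<in>W ` R. x' Q \<in> carrier G \<and> (\<forall>Y\<in>W ` R. x' Q \<in> Y \<longleftrightarrow> Y \<noteq> Q)"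
  proof (intro exI ballI)
    fix Q assume "Q \<in> W ` R"
    then obtain a where a: "a \<in> R" "Q = W a" by blast
    then have "the_inv_into R W Q = a" using the_inv_into_f_f[OF inj] by simp
    moreover have "x a \<in> Y \<longleftrightarrow> Y \<noteq> Q" if "Y \<in> W ` R" for Y
      using that a assms(3) inj_on_eq_iff[OF inj] by blast
    ultimately show "x (the_inv_into R W Q) \<in> carrier G \<and>
        (\<forall>Y\<in>W ` R. x (the_inv_into R W Q) \<in> Y \<longleftrightarrow> Y \<noteq> Q)"
      using assms(2) a by simp
  qed
  then show "general_position G (W ` R)"
    unfolding general_position_iff using assms(1) by blast
qed

lemma ex_irredundant_subfamily:
  assumes "finite F"
  obtains S where "S \<subseteq> F" "A \<inter> \<Inter>S = A \<inter> \<Inter>F"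
    "\<And>M. M \<in> S \<Longrightarrow> A \<inter> \<Inter>(S - {M}) \<noteq> A \<inter> \<Inter>S"
proof -
  obtain S where S: "S \<subseteq> F \<and> A \<inter> \<Inter>S = A \<inter> \<Inter>F"
    and least: "\<And>S'. S' \<subseteq> F \<and> A \<inter> \<Inter>S' = A \<inter> \<Inter>F \<Longrightarrow> card S \<le> card S'"
    using ex_has_least_nat[of "\<lambda>S. S \<subseteq> F \<and> A \<inter> \<Inter>S = A \<inter> \<Inter>F" F card] by auto
  have "A \<inter> \<Inter>(S - {M}) \<noteq> A \<inter> \<Inter>S" if "M \<in> S" for M
  proof
    assume "A \<inter> \<Inter>(S - {M}) = A \<inter> \<Inter>S"
    then have "card S \<le> card (S - {M})" using S by (intro least) auto
    moreover have "finite S" using S assms finite_subset by blast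
    ultimately show False using card_Diff1_less[OF _ that] by linarith
  qed
  with S that show ?thesis by blast
qed

lemma general_position_Int_image:
  assumes "finite S" "\<And>M. M \<in> S \<Longrightarrow> A \<inter> \<Inter>(S - {M}) \<noteq> A \<inter> \<Inter>S"
  shows "general_position (G\<lparr>carrier := A\<rparr>) ((\<lambda>M. M \<inter> A) ` S)" "inj_on (\<lambda>M. M \<inter> A) S"
proof -
  have "\<forall>M\<in>S. \<exists>x. x \<in> A \<inter> \<Inter>(S - {M}) \<and> x \<notin> M"
    using assms(2) by blast
  then obtain x where x: "\<And>M. M \<in> S \<Longrightarrow> x M \<in> A \<inter> \<Inter>(S - {M}) \<and> x M \<notin> M"
    by metis
  have sep: "x M \<in> M' \<inter> A \<longleftrightarrow> M \<noteq> M'" if "M \<in> S" "M' \<in> S" for M M'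
    using x[OF that(1)] that by auto
  have "x M \<in> carrier (G\<lparr>carrier := A\<rparr>)" if "M \<in> S" for M
    using x[OF that] by simp
  then show "general_position (G\<lparr>carrier := A\<rparr>) ((\<lambda>M. M \<inter> A) ` S)" "inj_on (\<lambda>M. M \<inter> A) S"
    using general_position_image[OF assms(1) _ sep] by blast+
qed

lemma
  assumes "finite A" "\<And>S. P S \<Longrightarrow> S \<subseteq> A"
  shows card_le_Max_card_family: "P S \<Longrightarrow> card S \<le> Max {card S | S. P S}"
    and Max_card_family_attained: "P S \<Longrightarrow> \<exists>S'. P S' \<and> card S' = Max {card S | S. P S}"
proof -
  have "{card S | S. P S} \<subseteq> {..card A}"
    using assms card_mono by fastforce
  then have fin: "finite {card S | S. P S}"
    using finite_subset by blast
  show "P S \<Longrightarrow> card S \<le> Max {card S | S. P S}"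
    using fin by (auto intro: Max_ge)
  assume "P S"
  then have "Max {card S | S. P S} \<in> {card S | S. P S}"
    using Max_in[OF fin] by blast
  then show "\<exists>S'. P S' \<and> card S' = Max {card S | S. P S}"
    by auto
qed

lemma set_multI: "a \<in> A \<Longrightarrow> b \<in> B \<Longrightarrow> a \<otimes>\<^bsub>G\<^esub> b \<in> A <#>\<^bsub>G\<^esub> B"
  unfolding set_mult_def by blast

lemma set_multE:
  assumes "x \<in> A <#>\<^bsub>G\<^esub> B"
  obtains a b where "a \<in> A" "b \<in> B" "x = a \<otimes>\<^bsub>G\<^esub> b"
  using assms unfolding set_mult_def by blast

lemma maximal_subgroup_subset: "maximal_subgroup G M \<Longrightarrow> M \<subseteq> carrier G"
  unfolding maximal_subgroup_def by (blast dest: subgroup.subset)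

lemma maximal_inv_subgroup_subset: "maximal_inv_subgroup H B N K \<Longrightarrow> K \<subseteq> N"
proof -
  assume "maximal_inv_subgroup H B N K"
  then have "subgroup K (H\<lparr>carrier := N\<rparr>)" unfolding maximal_inv_subgroup_def by blast
  then show "K \<subseteq> N" using subgroup.subset by fastforce
qed

lemma card_le_MaxDim:
  assumes "finite (carrier G)" "\<And>M. M \<in> \<M> \<Longrightarrow> maximal_subgroup G M" "general_position G \<M>"
  shows "card \<M> \<le> MaxDim G"
  unfolding MaxDim_def
proof (rule card_le_Max_card_family[of "Pow (carrier G)"])
  show "finite (Pow (carrier G))" using assms(1) by simp
  show "\<And>S. (\<forall>M\<in>S. maximal_subgroup G M) \<and> general_position G S \<Longrightarrow> S \<subseteq> Pow (carrier G)"
    using maximal_subgroup_subset by blast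
qed (use assms(2,3) in blast)

lemma MaxDim_attained:
  assumes "finite (carrier G)"
  obtains \<M> where "\<And>M. M \<in> \<M> \<Longrightarrow> maximal_subgroup G M" "general_position G \<M>"
    "card \<M> = MaxDim G"
proof -
  have "\<exists>\<M>. ((\<forall>M\<in>\<M>. maximal_subgroup G M) \<and> general_position G \<M>) \<and> card \<M> = MaxDim G"
    unfolding MaxDim_def
  proof (rule Max_card_family_attained[of "Pow (carrier G)" _ "{}"])
    show "finite (Pow (carrier G))" using assms(1) by simp
    show "\<And>S. (\<forall>M\<in>S. maximal_subgroup G M) \<and> general_position G S \<Longrightarrow> S \<subseteq> Pow (carrier G)"
      using maximal_subgroup_subset by blast
  qed (simp add: general_position_def)
  then show ?thesis using that by blast
qed

lemma card_le_MaxDim_act: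
  assumes "finite N" "\<And>K. K \<in> \<K> \<Longrightarrow> maximal_inv_subgroup H B N K"
    and "general_position (H\<lparr>carrier := N\<rparr>) \<K>"
  shows "card \<K> \<le> MaxDim_act H B N"
  unfolding MaxDim_act_def
proof (rule card_le_Max_card_family[of "Pow N"])
  show "finite (Pow N)" using assms(1) by simp
  show "\<And>S. (\<forall>K\<in>S. maximal_inv_subgroup H B N K) \<and> general_position (H\<lparr>carrier := N\<rparr>) S
      \<Longrightarrow> S \<subseteq> Pow N"
    using maximal_inv_subgroup_subset by blast
qed (use assms(2,3) in blast)

lemma MaxDim_act_attained:
  assumes "finite N"
  obtains \<K> where "\<And>K. K \<in> \<K> \<Longrightarrow> maximal_inv_subgroup H B N K"
    "general_position (H\<lparr>carrier := N\<rparr>) \<K>" "card \<K> = MaxDim_act H B N"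
proof -
  have "\<exists>\<K>. ((\<forall>K\<in>\<K>. maximal_inv_subgroup H B N K) \<and> general_position (H\<lparr>carrier := N\<rparr>) \<K>) \<and>
      card \<K> = MaxDim_act H B N"
    unfolding MaxDim_act_def
  proof (rule Max_card_family_attained[of "Pow N" _ "{}"])
    show "finite (Pow N)" using assms(1) by simp
    show "\<And>S. (\<forall>K\<in>S. maximal_inv_subgroup H B N K) \<and> general_position (H\<lparr>carrier := N\<rparr>) S
        \<Longrightarrow> S \<subseteq> Pow N"
      using maximal_inv_subgroup_subset by blast
  qed (simp add: general_position_def)
  then show ?thesis using that by blast
qed

lemma card_le_i_irr:
  assumes "finite (carrier G)" "irredundant G s"
  shows "card s \<le> i_irr G"
  unfolding i_irr_def
proof (rule card_le_Max_card_family[of "carrier G"])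
  show "\<And>s. irredundant G s \<Longrightarrow> s \<subseteq> carrier G" by (simp add: irredundant_def)
qed (use assms in blast)+

context group
begin

lemma subgroup_restrict_iff:
  assumes "subgroup J G"
  shows "subgroup K (G\<lparr>carrier := J\<rparr>) \<longleftrightarrow> subgroup K G \<and> K \<subseteq> J"
proof
  assume K: "subgroup K (G\<lparr>carrier := J\<rparr>)"
  show "subgroup K G \<and> K \<subseteq> J" using incl_subgroup[OF assms K] subgroup.subset[OF K] by simp
qed (use subgroup_incl assms in blast)

lemma ex_maximal_subgroup_superset:
  assumes fin: "finite (carrier G)" and "subgroup P G" "P \<noteq> carrier G"
  obtains M where "maximal_subgroup G M" "P \<subseteq> M"
proof -
  define Q where "Q K \<longleftrightarrow> subgroup K G \<and> K \<noteq> carrier G \<and> P \<subseteq> K" for K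
  have bound: "\<forall>K. Q K \<longrightarrow> card K < Suc (card (carrier G))"
    using card_mono[OF fin] subgroup.subset unfolding Q_def by (metis less_Suc_eq_le)
  have "Q P" unfolding Q_def using assms(2,3) by blast
  then obtain M where M: "Q M" and greatest: "\<And>K. Q K \<Longrightarrow> card K \<le> card M"
    using ex_has_greatest_nat[OF _ bound] by meson
  have "K = M \<or> K = carrier G" if "subgroup K G" "M \<subseteq> K" for K
  proof (cases "K = carrier G")
    case False
    then have "card K \<le> card M" using greatest that M unfolding Q_def by blast
    moreover have "finite K" using that(1) fin finite_subset subgroup.subset by blast
    ultimately show ?thesis using that(2) card_seteq by blast
  qed simp
  then have "maximal_subgroup G M" using M unfolding maximal_subgroup_def Q_def by blast
  then show ?thesis using M that unfolding Q_def by blast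
qed

lemma ex_irredundant_generating_set:
  assumes fin: "finite (carrier G)"
  obtains s where "irredundant G s" "generate G s = carrier G"
proof -
  define Q where "Q s \<longleftrightarrow> s \<subseteq> carrier G \<and> generate G s = carrier G" for s
  have "generate G (carrier G) = carrier G"
    using generate_incl[of "carrier G"] generate.incl[of _ "carrier G" G] by blast
  then have "Q (carrier G)" unfolding Q_def by simp
  then obtain s where s: "Q s" and least: "\<And>s'. Q s' \<Longrightarrow> card s \<le> card s'"
    using ex_has_least_nat[of Q "carrier G" card] by meson
  have "generate G (s - {h}) \<noteq> generate G s" if h: "h \<in> s" for h
  proof
    assume "generate G (s - {h}) = generate G s"
    then have "card s \<le> card (s - {h})" using s least unfolding Q_def by blast
    moreover have "finite s" using s fin finite_subset unfolding Q_def by blast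
    ultimately show False using card_Diff1_less[OF _ h] by linarith
  qed
  then show ?thesis using s that unfolding Q_def irredundant_def by blast
qed

lemma irredundant_image:
  assumes "\<And>a. a \<in> R \<Longrightarrow> x a \<in> carrier G" "\<And>a. a \<in> R \<Longrightarrow> subgroup (W a) G"
    and sep: "\<And>a b. a \<in> R \<Longrightarrow> b \<in> R \<Longrightarrow> x a \<in> W b \<longleftrightarrow> a \<noteq> b"
  shows "irredundant G (x ` R)" "inj_on x R"
proof -
  show inj: "inj_on x R"
  proof (rule inj_onI)
    fix a b assume "a \<in> R" "b \<in> R" "x a = x b"
    then show "a = b" using sep[of a b] sep[of b b] by auto
  qed
  have "generate G (x ` R - {x a}) \<noteq> generate G (x ` R)" if a: "a \<in> R" for a
  proof -
    have "x ` R - {x a} \<subseteq> W a" using sep a by auto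
    then have "generate G (x ` R - {x a}) \<subseteq> W a"
      using generate_subgroup_incl assms(2)[OF a] by blast
    moreover have "x a \<in> generate G (x ` R)" using a by (blast intro: generate.incl)
    ultimately show ?thesis using sep[OF a a] by blast
  qed
  then show "irredundant G (x ` R)" unfolding irredundant_def using assms(1) by blast
qed

lemma m_irr_attained:
  assumes "finite (carrier G)"
  obtains s where "irredundant G s" "generate G s = carrier G" "card s = m_irr G"
proof -
  obtain s0 where "irredundant G s0" "generate G s0 = carrier G"
    using ex_irredundant_generating_set[OF assms] .
  then have "\<exists>s. (irredundant G s \<and> generate G s = carrier G) \<and> card s = m_irr G"
    unfolding m_irr_def
    by (intro Max_card_family_attained[of "carrier G" _ s0]) (auto simp: assms irredundant_def)
  then show ?thesis using that by blast
qed

lemma m_irr_le_MaxDim: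
  assumes fin: "finite (carrier G)"
  shows "m_irr G \<le> MaxDim G"
proof -
  obtain s where irr: "irredundant G s" and gen: "generate G s = carrier G" and card: "card s = m_irr G"
    using m_irr_attained[OF fin] .
  have s_carrier: "s \<subseteq> carrier G" using irr unfolding irredundant_def by blast
  have "\<forall>h\<in>s. \<exists>M. maximal_subgroup G M \<and> generate G (s - {h}) \<subseteq> M"
  proof
    fix h assume h: "h \<in> s"
    have "subgroup (generate G (s - {h})) G"
      using s_carrier by (intro generate_is_subgroup) blast
    moreover have "generate G (s - {h}) \<noteq> carrier G"
      using irr h gen unfolding irredundant_def by blast
    ultimately show "\<exists>M. maximal_subgroup G M \<and> generate G (s - {h}) \<subseteq> M"
      by (meson ex_maximal_subgroup_superset[OF fin])
  qed
  from bchoice[OF this] obtain f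
    where f: "\<forall>h\<in>s. maximal_subgroup G (f h) \<and> generate G (s - {h}) \<subseteq> f h" by blast
  have not_in: "h \<notin> f h" if h: "h \<in> s" for h
  proof
    assume "h \<in> f h"
    have sub: "subgroup (f h) G" "f h \<noteq> carrier G"
      using f h unfolding maximal_subgroup_def by auto
    have "s - {h} \<subseteq> f h" using f h generate.incl[of _ "s - {h}" G] by blast
    then have "s \<subseteq> f h" using \<open>h \<in> f h\<close> by blast
    then have "carrier G \<subseteq> f h" using generate_subgroup_incl[OF _ sub(1)] gen by metis
    then show False using sub subgroup.subset by blast
  qed
  have in_other: "h \<in> f h'" if "h \<in> s" "h' \<in> s" "h \<noteq> h'" for h h'
    using f that generate.incl[of h "s - {h'}" G] by blast
  have sep: "\<And>h h'. h \<in> s \<Longrightarrow> h' \<in> s \<Longrightarrow> h \<in> f h' \<longleftrightarrow> h \<noteq> h'"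
    using not_in in_other by blast
  have fin_s: "finite s" using s_carrier fin finite_subset by blast
  have "\<And>h. h \<in> s \<Longrightarrow> h \<in> carrier G" using s_carrier by blast
  note image = general_position_image[OF fin_s this sep]
  have "card (f ` s) \<le> MaxDim G"
    using card_le_MaxDim[OF fin _ image(1)] f by blast
  then show ?thesis
    using card card_image[OF image(2)] by simp
qed

lemma modular_law_left:
  assumes "subgroup C G" "A \<subseteq> C" "B \<subseteq> carrier G"
  shows "(A <#> B) \<inter> C = A <#> (B \<inter> C)"
proof (intro equalityI subsetI)
  fix x assume "x \<in> (A <#> B) \<inter> C"
  then obtain a b where ab: "a \<in> A" "b \<in> B" "x = a \<otimes> b" "x \<in> C" by (blast elim: set_multE)
  then have "b = inv a \<otimes> x" using assms subgroup.mem_carrier by (fastforce simp: m_assoc[symmetric])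
  then have "b \<in> C" using ab assms(1,2) subgroup.m_closed subgroup.m_inv_closed by fastforce
  then show "x \<in> A <#> (B \<inter> C)" using ab by (blast intro: set_multI)
next
  fix x assume "x \<in> A <#> (B \<inter> C)"
  then show "x \<in> (A <#> B) \<inter> C"
    using assms(1,2) subgroup.m_closed by (fastforce elim: set_multE intro: set_multI)
qed

lemma modular_law_right:
  assumes "subgroup C G" "A \<subseteq> C" "B \<subseteq> carrier G"
  shows "(B <#> A) \<inter> C = (B \<inter> C) <#> A"
proof (intro equalityI subsetI)
  fix x assume "x \<in> (B <#> A) \<inter> C"
  then obtain a b where ab: "a \<in> A" "b \<in> B" "x = b \<otimes> a" "x \<in> C" by (blast elim: set_multE)
  then have "b = x \<otimes> inv a" using assms subgroup.mem_carrier by (fastforce simp: m_assoc)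
  then have "b \<in> C" using ab assms(1,2) subgroup.m_closed subgroup.m_inv_closed by fastforce
  then show "x \<in> (B \<inter> C) <#> A" using ab by (blast intro: set_multI)
next
  fix x assume "x \<in> (B \<inter> C) <#> A"
  then show "x \<in> (B <#> A) \<inter> C"
    using assms(1,2) subgroup.m_closed by (fastforce elim: set_multE intro: set_multI)
qed

lemma subset_set_mult_one_right:
  assumes "A \<subseteq> carrier G" "\<one> \<in> B" shows "A \<subseteq> A <#> B"
proof
  fix x assume x: "x \<in> A"
  have "x \<otimes> \<one> \<in> A <#> B" using set_multI[OF x assms(2)] .
  then show "x \<in> A <#> B" using x assms(1) by (simp add: subset_iff)
qed

lemma subset_set_mult_one_left:
  assumes "B \<subseteq> carrier G" "\<one> \<in> A" shows "B \<subseteq> A <#> B"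
proof
  fix x assume x: "x \<in> B"
  have "\<one> \<otimes> x \<in> A <#> B" using set_multI[OF assms(2) x] .
  then show "x \<in> A <#> B" using x assms(1) by (simp add: subset_iff)
qed

lemma normal_set_mult_subgroup:
  assumes "K \<lhd> G" "subgroup H G" shows "subgroup (K <#> H) G"
  using second_isomorphism_grp.normal_set_mult_subgroup assms
  unfolding second_isomorphism_grp_def second_isomorphism_grp_axioms_def by blast

lemma conj_invariantI:
  assumes "subgroup B G" "A \<subseteq> carrier G"
    and closed: "\<And>t x. t \<in> B \<Longrightarrow> x \<in> A \<Longrightarrow> t \<otimes> x \<otimes> inv t \<in> A"
  shows "conj_invariant G B A"
  unfolding conj_invariant_def
proof (intro ballI equalityI subsetI)
  fix t y assume "t \<in> B" "y \<in> (\<lambda>k. t \<otimes> k \<otimes> inv t) ` A"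
  then show "y \<in> A" using closed by blast
next
  fix t x assume t: "t \<in> B" and x: "x \<in> A"
  have tc: "t \<in> carrier G" using assms(1) t by (rule subgroup.mem_carrier)
  have xc: "x \<in> carrier G" using x assms(2) by blast
  have "x = t \<otimes> (inv t \<otimes> x \<otimes> inv (inv t)) \<otimes> inv t"
    using tc xc by (simp add: m_assoc[symmetric]) (simp add: m_assoc)
  moreover have "inv t \<otimes> x \<otimes> inv (inv t) \<in> A"
    using closed[OF subgroup.m_inv_closed[OF assms(1) t] x] .
  ultimately show "x \<in> (\<lambda>k. t \<otimes> k \<otimes> inv t) ` A" by (rule image_eqI)
qed

lemma conj_invariantD: "conj_invariant G B A \<Longrightarrow> t \<in> B \<Longrightarrow> x \<in> A \<Longrightarrow> t \<otimes> x \<otimes> inv t \<in> A"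
  unfolding conj_invariant_def by blast

lemma normal_imp_conj_invariant:
  assumes "K \<lhd> G" "subgroup B G" shows "conj_invariant G B K"
proof (rule conj_invariantI[OF assms(2)])
  show "K \<subseteq> carrier G" using normal_imp_subgroup[OF assms(1)] by (rule subgroup.subset)
  fix t x assume "t \<in> B" "x \<in> K"
  then show "t \<otimes> x \<otimes> inv t \<in> K"
    using normal.inv_op_closed2[OF assms(1)] subgroup.mem_carrier[OF assms(2)] by blast
qed

end

locale semidirect_product = group +
  fixes N T :: "'a set"
  assumes kernel_normal: "N \<lhd> G" and complement_subgroup: "subgroup T G"
    and kernel_Int_complement: "N \<inter> T = {\<one>}" and kernel_mult_complement: "N <#> T = carrier G"
begin

lemma kernel_subgroup: "subgroup N G"
  using kernel_normal by (rule normal_imp_subgroup)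

lemma kernel_subset: "N \<subseteq> carrier G"
  using kernel_subgroup by (rule subgroup.subset)

lemma complement_subset: "T \<subseteq> carrier G"
  using complement_subgroup by (rule subgroup.subset)

lemma set_mult_complement_Int_kernel:
  assumes "K \<subseteq> N" shows "(K <#> T) \<inter> N = K"
proof -
  have "(K <#> T) \<inter> N = K <#> {\<one>}"
    using modular_law_left[OF kernel_subgroup assms complement_subset] kernel_Int_complement
    by (simp add: Int_commute)
  also have "\<dots> = K" using assms kernel_subset by (simp flip: r_coset_eq_set_mult)
  finally show ?thesis .
qed

lemma kernel_set_mult_Int_complement:
  assumes "M \<subseteq> T" shows "(N <#> M) \<inter> T = M"
proof -
  have "(N <#> M) \<inter> T = {\<one>} <#> M"
    using modular_law_right[OF complement_subgroup assms kernel_subset] kernel_Int_complement by simp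
  also have "\<dots> = M" using assms complement_subset lcos_mult_one by (simp flip: l_coset_eq_set_mult)
  finally show ?thesis .
qed

lemma supergroup_of_complement_eq:
  assumes "subgroup L G" "T \<subseteq> L" shows "(L \<inter> N) <#> T = L"
proof -
  have "(L \<inter> N) <#> T = (N <#> T) \<inter> L"
    using modular_law_right[OF assms kernel_subset] by (simp add: Int_commute)
  also have "\<dots> = L" using kernel_mult_complement subgroup.subset[OF assms(1)] by blast
  finally show ?thesis .
qed

lemma supergroup_of_kernel_eq:
  assumes "subgroup L G" "N \<subseteq> L" shows "N <#> (L \<inter> T) = L"
proof -
  have "N <#> (L \<inter> T) = (N <#> T) \<inter> L"
    using modular_law_left[OF assms complement_subset] by (simp add: Int_commute)
  also have "\<dots> = L" using kernel_mult_complement subgroup.subset[OF assms(1)] by blast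
  finally show ?thesis .
qed

lemma maximal_kernel_set_mult:
  assumes "maximal_subgroup (G\<lparr>carrier := T\<rparr>) M"
  shows "maximal_subgroup G (N <#> M)"
proof -
  have M: "subgroup M G" "M \<subseteq> T" "M \<noteq> T"
    and max: "\<And>L. subgroup L G \<Longrightarrow> L \<subseteq> T \<Longrightarrow> M \<subseteq> L \<Longrightarrow> L = M \<or> L = T"
    using assms unfolding maximal_subgroup_def subgroup_restrict_iff[OF complement_subgroup] by auto
  have sub: "subgroup (N <#> M) G" using normal_set_mult_subgroup[OF kernel_normal M(1)] .
  have Int: "(N <#> M) \<inter> T = M" using kernel_set_mult_Int_complement[OF M(2)] .
  show ?thesis unfolding maximal_subgroup_def
  proof (intro conjI allI impI sub)
    show "N <#> M \<noteq> carrier G" using Int M(3) complement_subset by auto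
  next
    fix L assume L: "subgroup L G \<and> N <#> M \<subseteq> L"
    have "N \<subseteq> L"
      using L subset_set_mult_one_right[OF kernel_subset subgroup.one_closed[OF M(1)]] by blast
    moreover have "L \<inter> T = M \<or> L \<inter> T = T"
      using max[of "L \<inter> T"] L Int subgroups_Inter_pair[OF _ complement_subgroup] by blast
    ultimately show "L = N <#> M \<or> L = carrier G"
      using supergroup_of_kernel_eq[of L] L kernel_mult_complement by auto
  qed
qed

lemma maximal_kernel_set_mult_eq:
  assumes M: "maximal_subgroup G M" and "\<not> N \<subseteq> M"
  shows "N <#> M = carrier G"
proof -
  have sM: "subgroup M G" using M unfolding maximal_subgroup_def by blast
  have "M \<subseteq> N <#> M"
    using subset_set_mult_one_left[OF subgroup.subset[OF sM] subgroup.one_closed[OF kernel_subgroup]] .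
  then have "N <#> M = M \<or> N <#> M = carrier G"
    using M normal_set_mult_subgroup[OF kernel_normal sM] unfolding maximal_subgroup_def by blast
  moreover have "N <#> M \<noteq> M"
    using subset_set_mult_one_right[OF kernel_subset subgroup.one_closed[OF sM]] \<open>\<not> N \<subseteq> M\<close> by blast
  ultimately show ?thesis by blast
qed

lemma general_position_lift:
  assumes gpK: "general_position (G\<lparr>carrier := N\<rparr>) \<K>" and K: "\<And>K. K \<in> \<K> \<Longrightarrow> subgroup K G \<and> K \<subseteq> N"
    and gpM: "general_position (G\<lparr>carrier := T\<rparr>) \<M>" and M: "\<And>M. M \<in> \<M> \<Longrightarrow> subgroup M G \<and> M \<subseteq> T"
  shows "general_position G ((\<lambda>K. K <#> T) ` \<K> \<union> (\<lambda>M. N <#> M) ` \<M>)"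
    and "card ((\<lambda>K. K <#> T) ` \<K> \<union> (\<lambda>M. N <#> M) ` \<M>) = card \<K> + card \<M>"
proof -
  obtain xK where xK: "\<forall>K\<in>\<K>. xK K \<in> N \<and> (\<forall>Y\<in>\<K>. xK K \<in> Y \<longleftrightarrow> Y \<noteq> K)"
    using gpK unfolding general_position_iff by auto
  obtain xM where xM: "\<forall>M\<in>\<M>. xM M \<in> T \<and> (\<forall>Y\<in>\<M>. xM M \<in> Y \<longleftrightarrow> Y \<noteq> M)"
    using gpM unfolding general_position_iff by auto
  have fin: "finite (\<K> <+> \<M>)" using gpK gpM unfolding general_position_def by simp
  have one: "\<And>K. K \<in> \<K> \<Longrightarrow> \<one> \<in> K" "\<And>M. M \<in> \<M> \<Longrightarrow> \<one> \<in> M"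
    using K M subgroup.one_closed by blast+
  define W where "W = case_sum (\<lambda>K. K <#> T) (\<lambda>M. N <#> M)"
  define x where "x = case_sum xK xM"
  have "x a \<in> carrier G" if "a \<in> \<K> <+> \<M>" for a
    using that xK xM kernel_subset complement_subset by (auto simp: x_def)
  moreover have "x a \<in> W b \<longleftrightarrow> a \<noteq> b" if "a \<in> \<K> <+> \<M>" "b \<in> \<K> <+> \<M>" for a b
  proof -
    have inK: "y \<in> K <#> T \<longleftrightarrow> y \<in> K" if "y \<in> N" "K \<in> \<K>" for y K
      using set_mult_complement_Int_kernel[of K] K[OF that(2)] that(1) by blast
    have inM: "y \<in> N <#> M \<longleftrightarrow> y \<in> M" if "y \<in> T" "M \<in> \<M>" for y M
      using kernel_set_mult_Int_complement[of M] M[OF that(2)] that(1) by blast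
    have "xK K \<in> N <#> M" if "K \<in> \<K>" "M \<in> \<M>" for K M
      using subset_set_mult_one_right[OF kernel_subset one(2)[OF that(2)]] xK that(1) by blast
    moreover have "xM M \<in> K <#> T" if "K \<in> \<K>" "M \<in> \<M>" for K M
      using subset_set_mult_one_left[OF complement_subset one(1)[OF that(1)]] xM that(2) by blast
    ultimately show ?thesis
      using that xK xM inK inM by (auto simp: x_def W_def)
  qed
  ultimately have gp: "general_position G (W ` (\<K> <+> \<M>))" and inj: "inj_on W (\<K> <+> \<M>)"
    using general_position_image[OF fin] by blast+
  have image: "W ` (\<K> <+> \<M>) = (\<lambda>K. K <#> T) ` \<K> \<union> (\<lambda>M. N <#> M) ` \<M>"
    unfolding W_def by force
  show "general_position G ((\<lambda>K. K <#> T) ` \<K> \<union> (\<lambda>M. N <#> M) ` \<M>)"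
    using gp image by simp
  show "card ((\<lambda>K. K <#> T) ` \<K> \<union> (\<lambda>M. N <#> M) ` \<M>) = card \<K> + card \<M>"
    using card_image[OF inj] fin image by (simp add: card_Plus)
qed

lemma kernel_factor_notin:
  assumes Q: "subgroup Q G" and S: "\<And>Y. Y \<in> S \<Longrightarrow> subgroup Y G" and "N \<inter> \<Inter>S \<subseteq> Q"
    and "x \<in> \<Inter>S" "x \<notin> Q" and "n \<in> N" "t \<in> carrier G" "x = n \<otimes> t"
  shows "t \<notin> N <#> (Q \<inter> \<Inter>S)"
proof
  assume "t \<in> N <#> (Q \<inter> \<Inter>S)"
  then obtain n' v where nv: "n' \<in> N" "v \<in> Q \<inter> \<Inter>S" "t = n' \<otimes> v"
    by (rule set_multE)
  have nc: "n \<in> carrier G" "n' \<in> carrier G" using \<open>n \<in> N\<close> nv(1) kernel_subset by blast+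
  have vc: "v \<in> carrier G" using nv(2) subgroup.mem_carrier[OF Q] by blast
  define z where "z = n \<otimes> n'"
  have zc: "z \<in> carrier G" and zN: "z \<in> N"
    unfolding z_def using \<open>n \<in> N\<close> nv(1) nc subgroup.m_closed[OF kernel_subgroup] by auto
  have x_eq: "x = z \<otimes> v" unfolding z_def using \<open>x = n \<otimes> t\<close> nv(3) nc vc by (simp add: m_assoc)
  have "z \<in> Y" if Y: "Y \<in> S" for Y
  proof -
    have "x \<in> Y" "v \<in> Y" using \<open>x \<in> \<Inter>S\<close> nv(2) Y by auto
    then have "x \<otimes> inv v \<in> Y"
      using subgroup.m_closed[OF S[OF Y]] subgroup.m_inv_closed[OF S[OF Y]] by blast
    moreover have "x \<otimes> inv v = z" using x_eq zc vc by (simp add: m_assoc)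
    ultimately show ?thesis by simp
  qed
  then have "z \<in> Q" using \<open>N \<inter> \<Inter>S \<subseteq> Q\<close> zN by blast
  then have "z \<otimes> v \<in> Q" using nv(2) subgroup.m_closed[OF Q] by blast
  then show False using x_eq \<open>x \<notin> Q\<close> by simp
qed

lemma card_Diff_le_i_irr:
  assumes fin: "finite (carrier G)" and sub: "\<And>M. M \<in> \<M> \<Longrightarrow> subgroup M G"
    and gp: "general_position G \<M>" and "S \<subseteq> \<M>" and S: "N \<inter> \<Inter>S \<subseteq> \<Inter>\<M>"
  shows "card (\<M> - S) \<le> i_irr (G\<lparr>carrier := T\<rparr>)"
proof -
  obtain x where x: "\<forall>Q\<in>\<M>. x Q \<in> carrier G \<and> (\<forall>Y\<in>\<M>. x Q \<in> Y \<longleftrightarrow> Y \<noteq> Q)"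
    using gp unfolding general_position_iff by blast
  have "\<exists>t. t \<in> T \<and> (\<exists>n\<in>N. x Q = n \<otimes> t)" if "Q \<in> \<M>" for Q
  proof -
    have "x Q \<in> N <#> T" using x that kernel_mult_complement by simp
    then show ?thesis by (blast elim: set_multE)
  qed
  then have "\<forall>Q\<in>\<M>. \<exists>t. t \<in> T \<and> (\<exists>n\<in>N. x Q = n \<otimes> t)" by blast
  from bchoice[OF this] obtain t where t: "\<forall>Q\<in>\<M>. t Q \<in> T \<and> (\<exists>n\<in>N. x Q = n \<otimes> t Q)"
    by blast
  define W where "W Q = T \<inter> (N <#> (Q \<inter> \<Inter>S))" for Q
  have W_sub: "subgroup (W Q) (G\<lparr>carrier := T\<rparr>)" if "Q \<in> \<M>" for Q
  proof -
    have "subgroup (Q \<inter> \<Inter>S) G"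
      using sub that \<open>S \<subseteq> \<M>\<close> subgroups_Inter[of "insert Q S"] by auto
    then have "subgroup (N <#> (Q \<inter> \<Inter>S)) G"
      using normal_set_mult_subgroup[OF kernel_normal] by blast
    then show ?thesis
      unfolding W_def subgroup_restrict_iff[OF complement_subgroup]
      using subgroups_Inter_pair[OF complement_subgroup] by blast
  qed
  have sep: "t Q \<in> W Q' \<longleftrightarrow> Q \<noteq> Q'" if Q: "Q \<in> \<M> - S" and Q': "Q' \<in> \<M> - S" for Q Q'
  proof -
    obtain n where n: "n \<in> N" "x Q = n \<otimes> t Q" using t Q by blast
    have xQ: "\<forall>Y\<in>\<M>. x Q \<in> Y \<longleftrightarrow> Y \<noteq> Q" using x Q by blast
    have nc: "n \<in> carrier G" and tc: "t Q \<in> carrier G"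
      using n t Q kernel_subset complement_subset by auto
    have "Q \<noteq> Q' \<Longrightarrow> t Q \<in> W Q'"
    proof -
      assume "Q \<noteq> Q'"
      then have "x Q \<in> Q' \<inter> \<Inter>S" using xQ Q Q' \<open>S \<subseteq> \<M>\<close> by blast
      then have "inv n \<otimes> x Q \<in> N <#> (Q' \<inter> \<Inter>S)"
        using set_multI[OF subgroup.m_inv_closed[OF kernel_subgroup n(1)]] by blast
      moreover have "inv n \<otimes> x Q = t Q" using n(2) nc tc by (simp add: m_assoc[symmetric])
      ultimately show "t Q \<in> W Q'" unfolding W_def using t Q by auto
    qed
    moreover have "t Q \<notin> N <#> (Q \<inter> \<Inter>S)"
    proof (rule kernel_factor_notin)
      show "subgroup Q G" "\<And>Y. Y \<in> S \<Longrightarrow> subgroup Y G" using sub Q \<open>S \<subseteq> \<M>\<close> by blast+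
      show "N \<inter> \<Inter>S \<subseteq> Q" "x Q \<in> \<Inter>S" "x Q \<notin> Q" using S xQ Q \<open>S \<subseteq> \<M>\<close> by blast+
    qed (use n tc in blast)+
    then have "t Q \<notin> W Q" unfolding W_def by blast
    ultimately show ?thesis by blast
  qed
  have "\<And>Q. Q \<in> \<M> - S \<Longrightarrow> t Q \<in> carrier (G\<lparr>carrier := T\<rparr>)" using t by simp
  moreover have "\<And>Q. Q \<in> \<M> - S \<Longrightarrow> subgroup (W Q) (G\<lparr>carrier := T\<rparr>)" using W_sub by blast
  ultimately have irr: "irredundant (G\<lparr>carrier := T\<rparr>) (t ` (\<M> - S))"
    and inj: "inj_on t (\<M> - S)"
    using group.irredundant_image[OF subgroup_imp_group[OF complement_subgroup] _ _ sep] by blast+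
  have "finite (carrier (G\<lparr>carrier := T\<rparr>))"
    using fin complement_subset finite_subset by auto
  then show ?thesis
    using card_le_i_irr[OF _ irr] card_image[OF inj] by simp
qed

end

locale abelian_semidirect_product = semidirect_product +
  assumes kernel_commute: "\<And>x y. x \<in> N \<Longrightarrow> y \<in> N \<Longrightarrow> x \<otimes> y = y \<otimes> x"
begin

lemma conj_kernel_mult:
  assumes "n \<in> N" "g \<in> carrier G" "y \<in> N"
  shows "(n \<otimes> g) \<otimes> y \<otimes> inv (n \<otimes> g) = g \<otimes> y \<otimes> inv g"
proof -
  have nc: "n \<in> carrier G" and yc: "y \<in> carrier G" using assms kernel_subset by auto
  have gy: "g \<otimes> y \<otimes> inv g \<in> N" using normal.inv_op_closed2[OF kernel_normal assms(2,3)] .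
  then have gyc: "g \<otimes> y \<otimes> inv g \<in> carrier G" using kernel_subset by blast
  have "(n \<otimes> g) \<otimes> y \<otimes> inv (n \<otimes> g) = n \<otimes> (g \<otimes> y \<otimes> inv g) \<otimes> inv n"
    using nc yc assms(2) by (simp add: inv_mult_group m_assoc)
  also have "\<dots> = (g \<otimes> y \<otimes> inv g) \<otimes> n \<otimes> inv n"
    using kernel_commute[OF assms(1) gy] by simp
  also have "\<dots> = g \<otimes> y \<otimes> inv g" using nc gyc by (simp add: m_assoc)
  finally show ?thesis .
qed

lemma invariant_subgroup_normal:
  assumes "subgroup K G" "K \<subseteq> N" "conj_invariant G T K"
  shows "K \<lhd> G"
  unfolding normal_inv_iff
proof (intro conjI ballI assms(1))
  fix g k assume g: "g \<in> carrier G" and k: "k \<in> K"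
  then have "g \<in> N <#> T" using kernel_mult_complement by simp
  then obtain n t where nt: "n \<in> N" "t \<in> T" "g = n \<otimes> t" by (rule set_multE)
  have "g \<otimes> k \<otimes> inv g = t \<otimes> k \<otimes> inv t"
    using conj_kernel_mult[OF nt(1) _ ] nt complement_subset k assms(2) by blast
  then show "g \<otimes> k \<otimes> inv g \<in> K" using conj_invariantD[OF assms(3) nt(2) k] by simp
qed

lemma Int_kernel_normal:
  assumes "subgroup M G" "N <#> M = carrier G"
  shows "M \<inter> N \<lhd> G"
  unfolding normal_inv_iff
proof (intro conjI ballI)
  show "subgroup (M \<inter> N) G" using subgroups_Inter_pair[OF assms(1) kernel_subgroup] .
  fix g x assume g: "g \<in> carrier G" and x: "x \<in> M \<inter> N"
  then have "g \<in> N <#> M" using assms(2) by simp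
  then obtain n m where nm: "n \<in> N" "m \<in> M" "g = n \<otimes> m" by (rule set_multE)
  have mc: "m \<in> carrier G" using subgroup.mem_carrier[OF assms(1) nm(2)] .
  have "g \<otimes> x \<otimes> inv g = m \<otimes> x \<otimes> inv m"
    using conj_kernel_mult[OF nm(1) mc] nm(3) x by blast
  moreover have "m \<otimes> x \<otimes> inv m \<in> M"
    using nm(2) x subgroup.m_closed[OF assms(1)] subgroup.m_inv_closed[OF assms(1)] by blast
  moreover have "m \<otimes> x \<otimes> inv m \<in> N" using normal.inv_op_closed2[OF kernel_normal mc] x by blast
  ultimately show "g \<otimes> x \<otimes> inv g \<in> M \<inter> N" by simp
qed

lemma maximal_inv_set_mult_complement:
  assumes "maximal_inv_subgroup G T N K"
  shows "maximal_subgroup G (K <#> T)"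
proof -
  have K: "subgroup K G" "K \<subseteq> N" "K \<noteq> N" "conj_invariant G T K"
    and max: "\<And>L. subgroup L G \<Longrightarrow> L \<subseteq> N \<Longrightarrow> conj_invariant G T L \<Longrightarrow> K \<subseteq> L \<Longrightarrow> L = K \<or> L = N"
    using assms unfolding maximal_inv_subgroup_def subgroup_restrict_iff[OF kernel_subgroup] by auto
  have sub: "subgroup (K <#> T) G"
    using normal_set_mult_subgroup[OF invariant_subgroup_normal[OF K(1,2,4)] complement_subgroup] .
  have Int: "(K <#> T) \<inter> N = K" using set_mult_complement_Int_kernel[OF K(2)] .
  show ?thesis unfolding maximal_subgroup_def
  proof (intro conjI allI impI sub)
    show "K <#> T \<noteq> carrier G" using Int K(3) kernel_subset by auto
  next
    fix L assume L: "subgroup L G \<and> K <#> T \<subseteq> L"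
    have TL: "T \<subseteq> L"
      using L subset_set_mult_one_left[OF complement_subset subgroup.one_closed[OF K(1)]] by blast
    have "conj_invariant G T (L \<inter> N)"
    proof (rule conj_invariantI[OF complement_subgroup])
      show "L \<inter> N \<subseteq> carrier G" using kernel_subset by blast
      fix t x assume t: "t \<in> T" and x: "x \<in> L \<inter> N"
      have sL: "subgroup L G" and tL: "t \<in> L" using L TL t by blast+
      have "t \<otimes> x \<otimes> inv t \<in> L"
        using x tL subgroup.m_closed[OF sL] subgroup.m_inv_closed[OF sL] by blast
      moreover have "t \<otimes> x \<otimes> inv t \<in> N"
        using normal.inv_op_closed2[OF kernel_normal] t x complement_subset by blast
      ultimately show "t \<otimes> x \<otimes> inv t \<in> L \<inter> N" by blast
    qed
    then have "L \<inter> N = K \<or> L \<inter> N = N"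
      using max[of "L \<inter> N"] L Int subgroups_Inter_pair[OF _ kernel_subgroup] by blast
    then show "L = K <#> T \<or> L = carrier G"
      using supergroup_of_complement_eq[of L] L TL kernel_mult_complement by auto
  qed
qed

lemma maximal_Int_kernel:
  assumes M: "maximal_subgroup G M" and "\<not> N \<subseteq> M"
  shows "maximal_inv_subgroup G T N (M \<inter> N)"
proof -
  have sM: "subgroup M G" and max: "\<And>L. subgroup L G \<Longrightarrow> M \<subseteq> L \<Longrightarrow> L = M \<or> L = carrier G"
    using M unfolding maximal_subgroup_def by auto
  have one: "\<one> \<in> M" using subgroup.one_closed[OF sM] .
  have NM: "N <#> M = carrier G" using maximal_kernel_set_mult_eq[OF M \<open>\<not> N \<subseteq> M\<close>] .
  have "L = M \<inter> N \<or> L = N"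
    if L: "subgroup L G" "L \<subseteq> N" "conj_invariant G T L" "M \<inter> N \<subseteq> L" for L
  proof -
    have LM: "subgroup (L <#> M) G"
      using normal_set_mult_subgroup[OF invariant_subgroup_normal[OF L(1-3)] sM] .
    have "M \<subseteq> L <#> M"
      using subset_set_mult_one_left[OF subgroup.subset[OF sM] subgroup.one_closed[OF L(1)]] .
    then consider "L <#> M = M" | "L <#> M = carrier G" using max LM by blast
    then show ?thesis
    proof cases
      case 1
      then have "L \<subseteq> M" using subset_set_mult_one_right[OF subgroup.subset[OF L(1)] one] by blast
      then show ?thesis using L(2,4) by blast
    next
      case 2
      have "N = L <#> (M \<inter> N)"
        using modular_law_left[OF kernel_subgroup L(2) subgroup.subset[OF sM]] 2 kernel_subset
        by (simp add: Int_absorb1)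
      also have "\<dots> \<subseteq> L <#> L" using L(4) mono_set_mult by blast
      also have "\<dots> = L" using subgroup_mult_id[OF L(1)] .
      finally show ?thesis using L(2) by blast
    qed
  qed
  moreover have "conj_invariant G T (M \<inter> N)"
    using normal_imp_conj_invariant[OF Int_kernel_normal[OF sM NM] complement_subgroup] .
  moreover have "subgroup (M \<inter> N) G" using subgroups_Inter_pair[OF sM kernel_subgroup] .
  ultimately show ?thesis
    unfolding maximal_inv_subgroup_def subgroup_restrict_iff[OF kernel_subgroup]
    using \<open>\<not> N \<subseteq> M\<close> by blast
qed

lemma MaxDim_act_plus_MaxDim_le:
  assumes fin: "finite (carrier G)"
  shows "MaxDim_act G T N + MaxDim (G\<lparr>carrier := T\<rparr>) \<le> MaxDim G"
proof -
  have finN: "finite N" using fin kernel_subset finite_subset by blast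
  have finT: "finite (carrier (G\<lparr>carrier := T\<rparr>))" using fin complement_subset finite_subset by auto
  obtain \<K> where K: "\<And>K. K \<in> \<K> \<Longrightarrow> maximal_inv_subgroup G T N K"
    and gpK: "general_position (G\<lparr>carrier := N\<rparr>) \<K>" and cardK: "card \<K> = MaxDim_act G T N"
    using MaxDim_act_attained[OF finN] by blast
  obtain \<M> where M: "\<And>M. M \<in> \<M> \<Longrightarrow> maximal_subgroup (G\<lparr>carrier := T\<rparr>) M"
    and gpM: "general_position (G\<lparr>carrier := T\<rparr>) \<M>" and cardM: "card \<M> = MaxDim (G\<lparr>carrier := T\<rparr>)"
    using MaxDim_attained[OF finT] by blast
  have K_sub: "\<And>K. K \<in> \<K> \<Longrightarrow> subgroup K G \<and> K \<subseteq> N"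
    using K unfolding maximal_inv_subgroup_def subgroup_restrict_iff[OF kernel_subgroup] by blast
  have M_sub: "\<And>M. M \<in> \<M> \<Longrightarrow> subgroup M G \<and> M \<subseteq> T"
    using M unfolding maximal_subgroup_def subgroup_restrict_iff[OF complement_subgroup] by blast
  note lift = general_position_lift[OF gpK K_sub gpM M_sub]
  have "maximal_subgroup G Y" if "Y \<in> (\<lambda>K. K <#> T) ` \<K> \<union> (\<lambda>M. N <#> M) ` \<M>" for Y
  proof -
    from that consider K where "K \<in> \<K>" "Y = K <#> T" | M where "M \<in> \<M>" "Y = N <#> M" by blast
    then show ?thesis
      by cases (simp_all add: K M maximal_inv_set_mult_complement maximal_kernel_set_mult)
  qed
  from card_le_MaxDim[OF fin this lift(1)] show ?thesis
    using lift(2) cardK cardM by simp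
qed

lemma MaxDim_le_MaxDim_act_plus_i_irr:
  assumes fin: "finite (carrier G)"
  shows "MaxDim G \<le> MaxDim_act G T N + i_irr (G\<lparr>carrier := T\<rparr>)"
proof -
  obtain \<M> where M: "\<And>M. M \<in> \<M> \<Longrightarrow> maximal_subgroup G M"
    and gp: "general_position G \<M>" and card: "card \<M> = MaxDim G"
    using MaxDim_attained[OF fin] by blast
  have finM: "finite \<M>" using gp unfolding general_position_def by blast
  obtain S where "S \<subseteq> \<M>" and S: "N \<inter> \<Inter>S = N \<inter> \<Inter>\<M>"
    and irr: "\<And>M. M \<in> S \<Longrightarrow> N \<inter> \<Inter>(S - {M}) \<noteq> N \<inter> \<Inter>S"
    using ex_irredundant_subfamily[OF finM] by blast
  have finS: "finite S" using finM \<open>S \<subseteq> \<M>\<close> finite_subset by blast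
  have "\<not> N \<subseteq> M" if "M \<in> S" for M
  proof
    assume "N \<subseteq> M"
    then have "N \<inter> \<Inter>(S - {M}) = N \<inter> \<Inter>S" using that by blast
    then show False using irr[OF that] by blast
  qed
  then have maxK: "\<And>K. K \<in> (\<lambda>M. M \<inter> N) ` S \<Longrightarrow> maximal_inv_subgroup G T N K"
    using M \<open>S \<subseteq> \<M>\<close> maximal_Int_kernel by blast
  have finN: "finite N" using fin kernel_subset finite_subset by blast
  have "card S \<le> MaxDim_act G T N"
    using card_le_MaxDim_act[OF finN maxK general_position_Int_image(1)[OF finS irr]]
      card_image[OF general_position_Int_image(2)[OF finS irr]] by simp
  moreover have "card (\<M> - S) \<le> i_irr (G\<lparr>carrier := T\<rparr>)"
  proof (rule card_Diff_le_i_irr[OF fin _ gp \<open>S \<subseteq> \<M>\<close>])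
    show "\<And>M. M \<in> \<M> \<Longrightarrow> subgroup M G" using M unfolding maximal_subgroup_def by blast
    show "N \<inter> \<Inter>S \<subseteq> \<Inter>\<M>" using S by blast
  qed
  moreover have "card \<M> = card S + card (\<M> - S)"
    using card_Diff_subset[OF finS \<open>S \<subseteq> \<M>\<close>] card_mono[OF finM \<open>S \<subseteq> \<M>\<close>] by simp
  ultimately show ?thesis using card by simp
qed

end

theorem corollary3p5:
  fixes H :: "('a, 'b) monoid_scheme" and N T :: "'a set"
  assumes "group H" and "finite (carrier H)"
    and "N \<lhd> H" and "subgroup T H"
    and "N \<inter> T = {\<one>\<^bsub>H\<^esub>}" and "N <#>\<^bsub>H\<^esub> T = carrier H"
    and "\<forall>x\<in>N. \<forall>y\<in>N. x \<otimes>\<^bsub>H\<^esub> y = y \<otimes>\<^bsub>H\<^esub> x"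
    and "flat (H\<lparr>carrier := T\<rparr>)"
  shows "MaxDim H = MaxDim_act H T N + MaxDim (H\<lparr>carrier := T\<rparr>)"
proof -
  interpret abelian_semidirect_product H N T
    using assms unfolding abelian_semidirect_product_def abelian_semidirect_product_axioms_def
      semidirect_product_def semidirect_product_axioms_def by blast
  have "i_irr (H\<lparr>carrier := T\<rparr>) = m_irr (H\<lparr>carrier := T\<rparr>)"
    using assms(8) unfolding flat_def by simp
  also have "\<dots> \<le> MaxDim (H\<lparr>carrier := T\<rparr>)"
  proof (rule group.m_irr_le_MaxDim[OF subgroup_imp_group[OF assms(4)]])
    show "finite (carrier (H\<lparr>carrier := T\<rparr>))"
      using assms(2) complement_subset finite_subset by auto
  qed
  finally show ?thesis
    using MaxDim_act_plus_MaxDim_le[OF assms(2)] MaxDim_le_MaxDim_act_plus_i_irr[OF assms(2)] by linarith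
qed

end
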